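(* Let $\mathcal{G}=(V,E,\lambda)$ be a happy temporal graph whose footprint $(V,E)$ is a complete graph. Then $\mathcal{G}$ is bidirectionally temporally connected, but for every edge $e\in E$, the temporal graph obtained from $\mathcal{G}$ by removing $e$ is not bidirectionally temporally connected.
   Context: A temporal graph is $\mathcal{G}=(V,E,\lambda)$ with $V$ finite, $E$ undirected edges, $\lambda:E\to 2^{\mathbb{N}}$ the time labels; $(V,E)$ is the footprint. It is simple if every edge has exactly one label, proper if no two adjacent edges share a label, and happy if both simple and proper. A temporal path is a sequence of pairs $(e_i,t_i)$, $t_i\in\lambda(e_i)$, with $\langle e_i\rangle$ a path in the footprint and $\langle t_i\rangle$ non-decreasing (non-strict) or increasing (strict); in proper graphs the two notions coincide. A bi-path between $u$ and $v$ is a pair $(p_1,p_2)$ with $p_1$ a temporal path from $u$ to $v$ and $p_2$ a temporal path from $v$ to $u$ along the same underlying path reversed. $\mathcal{G}$ is bidirectionally temporally connected if every pair of distinct vertices is joined by a bi-path. *)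

theory Defs
  imports Main
begin

definition temporal_graph :: "'a set \<Rightarrow> 'a set set \<Rightarrow> bool" where
  "temporal_graph V E \<longleftrightarrow> finite V \<and>
     (\<forall>e\<in>E. \<exists>u v. u \<in> V \<and> v \<in> V \<and> u \<noteq> v \<and> e = {u, v})"

definition complete_footprint :: "'a set \<Rightarrow> 'a set set \<Rightarrow> bool" where
  "complete_footprint V E \<longleftrightarrow> E = {{u, v} | u v. u \<in> V \<and> v \<in> V \<and> u \<noteq> v}"

definition simple_tg :: "'a set set \<Rightarrow> ('a set \<Rightarrow> nat set) \<Rightarrow> bool" where
  "simple_tg E lam \<longleftrightarrow> (\<forall>e\<in>E. card (lam e) = 1)"

definition proper_tg :: "'a set set \<Rightarrow> ('a set \<Rightarrow> nat set) \<Rightarrow> bool" where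
  "proper_tg E lam \<longleftrightarrow> (\<forall>e1\<in>E. \<forall>e2\<in>E. e1 \<noteq> e2 \<and> e1 \<inter> e2 \<noteq> {} \<longrightarrow> lam e1 \<inter> lam e2 = {})"

definition happy_tg :: "'a set set \<Rightarrow> ('a set \<Rightarrow> nat set) \<Rightarrow> bool" where
  "happy_tg E lam \<longleftrightarrow> simple_tg E lam \<and> proper_tg E lam"

definition temporal_path :: "'a set set \<Rightarrow> ('a set \<Rightarrow> nat set) \<Rightarrow> 'a list \<Rightarrow> nat list \<Rightarrow> bool" where
  "temporal_path E lam vs ts \<longleftrightarrow>
     length vs = Suc (length ts) \<and> distinct vs \<and>
     (\<forall>i < length ts. {vs ! i, vs ! Suc i} \<in> E \<and> ts ! i \<in> lam {vs ! i, vs ! Suc i}) \<and>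
     sorted ts"

definition bipath :: "'a set set \<Rightarrow> ('a set \<Rightarrow> nat set) \<Rightarrow> 'a \<Rightarrow> 'a \<Rightarrow> bool" where
  "bipath E lam u v \<longleftrightarrow> (\<exists>vs ts1 ts2. vs \<noteq> [] \<and> hd vs = u \<and> last vs = v \<and>
     temporal_path E lam vs ts1 \<and> temporal_path E lam (rev vs) ts2)"

definition bi_temporally_connected :: "'a set \<Rightarrow> 'a set set \<Rightarrow> ('a set \<Rightarrow> nat set) \<Rightarrow> bool" where
  "bi_temporally_connected V E lam \<longleftrightarrow>
     (\<forall>u\<in>V. \<forall>v\<in>V. u \<noteq> v \<longrightarrow> bipath E lam u v)"

end

theory Submission
  imports Defs
begin

text \<open>In a proper graph consecutive edges of a path carry distinct labels, so the labels
along any temporal path strictly increase. In a simple graph the path back along the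
reversed vertex sequence must use the same labels in reverse order, which then strictly
decrease. Hence in a happy graph the only bi-path between u and v is the edge {u, v} itself,
so bidirectional connectivity forces every edge to be present.\<close>

lemma happy_tg_mono:
  assumes "happy_tg E lam" and "E' \<subseteq> E"
  shows "happy_tg E' lam"
  using assms unfolding happy_tg_def simple_tg_def proper_tg_def by blast

lemma bipath_edge:
  assumes "{u, v} \<in> E" and "u \<noteq> v" and "t \<in> lam {u, v}"
  shows "bipath E lam u v"
proof -
  have "temporal_path E lam [u, v] [t]" and "temporal_path E lam [v, u] [t]"
    using assms by (simp_all add: temporal_path_def insert_commute)
  then show ?thesis
    unfolding bipath_def by (intro exI[of _ "[u, v]"]) auto
qed

lemma proper_temporal_path_strict:
  assumes "proper_tg E lam" and "temporal_path E lam vs ts"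
  shows "sorted_wrt (<) ts"
  unfolding sorted_wrt_iff_nth_Suc_transp[OF transp_on_less]
proof (intro allI impI)
  fix i assume i: "Suc i < length ts"
  let ?a = "{vs ! i, vs ! Suc i}" and ?b = "{vs ! Suc i, vs ! Suc (Suc i)}"
  have len: "length vs = Suc (length ts)" and "distinct vs" and "sorted ts"
    and edges: "\<And>j. j < length ts \<Longrightarrow> {vs ! j, vs ! Suc j} \<in> E \<and> ts ! j \<in> lam {vs ! j, vs ! Suc j}"
    using assms(2) by (simp_all add: temporal_path_def)
  have "vs ! i \<noteq> vs ! Suc (Suc i)"
    using \<open>distinct vs\<close> i len by (simp add: nth_eq_iff_index_eq)
  then have "?a \<noteq> ?b"
    by (auto simp: doubleton_eq_iff)
  then have "lam ?a \<inter> lam ?b = {}"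
    using assms(1) edges[of i] edges[of "Suc i"] i unfolding proper_tg_def by auto
  then have "ts ! i \<noteq> ts ! Suc i"
    using edges[of i] edges[of "Suc i"] i by auto
  moreover have "ts ! i \<le> ts ! Suc i"
    using \<open>sorted ts\<close> i by (simp add: sorted_iff_nth_Suc)
  ultimately show "ts ! i < ts ! Suc i"
    by simp
qed

lemma simple_temporal_path_label:
  assumes "simple_tg E lam" and "temporal_path E lam vs ts" and "i < length ts"
  shows "lam {vs ! i, vs ! Suc i} = {ts ! i}"
proof -
  have "{vs ! i, vs ! Suc i} \<in> E" and "ts ! i \<in> lam {vs ! i, vs ! Suc i}"
    using assms(2,3) by (simp_all add: temporal_path_def)
  then show ?thesis
    using assms(1) unfolding simple_tg_def by (metis card_1_singletonE singletonD)
qed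

lemma simple_temporal_path_rev:
  assumes "simple_tg E lam"
    and fwd: "temporal_path E lam vs ts" and bwd: "temporal_path E lam (rev vs) ts'"
  shows "ts' = rev ts"
proof (rule nth_equalityI)
  have len: "length vs = Suc (length ts)" "length vs = Suc (length ts')"
    using fwd bwd by (simp_all add: temporal_path_def)
  then show "length ts' = length (rev ts)"
    by simp
  fix i assume "i < length ts'"
  define j where "j = length ts - Suc i"
  have j: "j < length ts" "Suc j = length ts - i"
    using \<open>i < length ts'\<close> len by (simp_all add: j_def)
  have "{rev vs ! i, rev vs ! Suc i} = {vs ! j, vs ! Suc j}"
    using \<open>i < length ts'\<close> len j by (auto simp: rev_nth j_def Suc_diff_Suc)
  then have "{ts' ! i} = {ts ! j}"
    using simple_temporal_path_label[OF assms(1) bwd \<open>i < length ts'\<close>]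
      simple_temporal_path_label[OF assms(1) fwd j(1)] by simp
  then show "ts' ! i = rev ts ! i"
    using j by (simp add: rev_nth j_def)
qed

lemma happy_bipath_imp_edge:
  assumes "happy_tg E lam" and "u \<noteq> v" and "bipath E lam u v"
  shows "{u, v} \<in> E"
proof -
  obtain vs ts ts' where vs: "vs \<noteq> []" "hd vs = u" "last vs = v"
    and fwd: "temporal_path E lam vs ts" and bwd: "temporal_path E lam (rev vs) ts'"
    using assms(3) unfolding bipath_def by blast
  have "sorted_wrt (<) ts" and "sorted_wrt (<) (rev ts)"
    using assms(1) proper_temporal_path_strict[OF _ fwd] proper_temporal_path_strict[OF _ bwd]
      simple_temporal_path_rev[OF _ fwd bwd] by (simp_all add: happy_tg_def)
  have "length ts \<le> 1"
  proof (rule ccontr)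
    assume "\<not> length ts \<le> 1"
    then have "ts ! 0 < ts ! 1" and "ts ! 1 < ts ! 0"
      using sorted_wrt_nth_less[OF \<open>sorted_wrt (<) ts\<close>, of 0 1]
        sorted_wrt_nth_less[OF \<open>sorted_wrt (<) (rev ts)\<close>[unfolded sorted_wrt_rev], of 0 1]
      by simp_all
    then show False
      by simp
  qed
  moreover have len: "length vs = Suc (length ts)"
    using fwd by (simp add: temporal_path_def)
  moreover have "length ts \<noteq> 0"
    using vs assms(2) len by (auto simp: length_Suc_conv)
  ultimately have "length ts = 1"
    by linarith
  then have "hd vs = vs ! 0" and "last vs = vs ! 1"
    using vs(1) len by (simp_all add: hd_conv_nth last_conv_nth)
  then show ?thesis
    using fwd vs \<open>length ts = 1\<close> by (auto simp: temporal_path_def)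
qed

lemma simple_complete_bi_temporally_connected:
  assumes "simple_tg E lam" and "complete_footprint V E"
  shows "bi_temporally_connected V E lam"
  unfolding bi_temporally_connected_def
proof (intro ballI impI)
  fix u v assume "u \<in> V" "v \<in> V" "u \<noteq> v"
  then have "{u, v} \<in> E"
    using assms(2) unfolding complete_footprint_def by blast
  then have "card (lam {u, v}) = 1"
    using assms(1) by (simp add: simple_tg_def)
  then obtain t where "t \<in> lam {u, v}"
    by (auto simp: card_1_singleton_iff)
  then show "bipath E lam u v"
    using bipath_edge[OF \<open>{u, v} \<in> E\<close> \<open>u \<noteq> v\<close>] by blast
qed

lemma happy_bi_temporally_connected_imp_edge:
  assumes "happy_tg E lam" and "bi_temporally_connected V E lam"
    and "u \<in> V" and "v \<in> V" and "u \<noteq> v"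
  shows "{u, v} \<in> E"
proof -
  have "bipath E lam u v"
    using assms(2-5) unfolding bi_temporally_connected_def by blast
  then show ?thesis
    by (rule happy_bipath_imp_edge[OF assms(1,5)])
qed

theorem lemma4:
  fixes V :: "'a set" and E :: "'a set set" and lam :: "'a set \<Rightarrow> nat set"
  assumes "temporal_graph V E"
    and "happy_tg E lam"
    and "complete_footprint V E"
  shows "bi_temporally_connected V E lam \<and>
         (\<forall>e\<in>E. \<not> bi_temporally_connected V (E - {e}) lam)"
proof
  show "bi_temporally_connected V E lam"
    using assms(2) simple_complete_bi_temporally_connected[OF _ assms(3)]
    by (simp add: happy_tg_def)
  show "\<forall>e\<in>E. \<not> bi_temporally_connected V (E - {e}) lam"
  proof (intro ballI notI)
    fix e assume "e \<in> E" and connected: "bi_temporally_connected V (E - {e}) lam"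
    then obtain u v where "u \<in> V" "v \<in> V" "u \<noteq> v" and e: "e = {u, v}"
      using assms(3) unfolding complete_footprint_def by blast
    have "happy_tg (E - {e}) lam"
      using happy_tg_mono[OF assms(2)] by (simp add: Diff_subset)
    then have "{u, v} \<in> E - {e}"
      using connected \<open>u \<in> V\<close> \<open>v \<in> V\<close> \<open>u \<noteq> v\<close>
      by (rule happy_bi_temporally_connected_imp_edge)
    then show False
      using e by simp
  qed
qed

end
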